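(* Let $X$ be a real random variable and let $Y_1\sim\mathcal{N}(0,\sigma_{Y_1}^2)$, $Y_2\sim\mathcal{N}(0,\sigma_{Y_2}^2)$ with $\sigma_{Y_1}>\sigma_{Y_2}\ge0$, where $X$ is independent of $Y_1$ and $X$ is independent of $Y_2$. Then for all $\varepsilon\in\mathbb{R}$, $$\mathbb{P}[X+|Y_1|\le\varepsilon]\le\mathbb{P}[X+|Y_2|\le\varepsilon].$$
   Context: $\mathcal{N}(0,0)$ denotes the point mass at $0$. *)

theory Defs
  imports "HOL-Probability.Probability"
begin

text \<open>Centered normal law with standard deviation s (variance s^2) on the reals;
  for s = 0 it is the point mass at 0 (the paper's convention N(0,0)).\<close>
definition centered_normal :: "real \<Rightarrow> real measure" where
  "centered_normal s =
     (if s = 0 then return borel 0 else density lborel (normal_density 0 s))"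

end

theory Submission
  imports Defs
begin

text \<open>By independence (Fubini on the joint law), \<open>P[X + |Y| \<le> \<epsilon>]\<close> is the integral of
  \<open>P[|Y| \<le> \<epsilon> - x]\<close> against the law of \<open>X\<close>. Writing a centered normal of standard deviation
  \<open>\<sigma> > 0\<close> as \<open>\<sigma> Z\<close> with \<open>Z\<close> standard normal, \<open>P[|\<sigma> Z| \<le> t]\<close> is antitone in \<open>\<sigma>\<close>; for
  \<open>\<sigma> = 0\<close> it equals \<open>1\<close> whenever the event is nonempty. Hence the integrands are pointwise
  ordered.\<close>

lemma normal_density_affine:
  assumes "\<sigma> > 0"
  shows "\<sigma> * normal_density \<mu> \<sigma> (\<mu> + \<sigma> * z) = std_normal_density z"
proof -
  have "sqrt (2 * pi * \<sigma>\<^sup>2) = \<sigma> * sqrt (2 * pi)"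
    using assms by (simp add: real_sqrt_mult power2_eq_square mult_ac)
  moreover have "(\<sigma> * z)\<^sup>2 / (2 * \<sigma>\<^sup>2) = z\<^sup>2 / 2"
    using assms by (simp add: power2_eq_square field_simps)
  ultimately show ?thesis
    using assms by (simp add: normal_density_def field_simps)
qed

lemma emeasure_centered_normal:
  assumes "\<sigma> > 0" and "A \<in> sets borel"
  shows "emeasure (centered_normal \<sigma>) A
    = (\<integral>\<^sup>+z. ennreal (std_normal_density z) * indicator A (\<sigma> * z) \<partial>lborel)"
proof -
  have "emeasure (centered_normal \<sigma>) A
      = (\<integral>\<^sup>+y. ennreal (normal_density 0 \<sigma> y) * indicator A y \<partial>lborel)"
    using assms by (simp add: centered_normal_def emeasure_density)
  also have "\<dots> = ennreal \<sigma> * (\<integral>\<^sup>+z. ennreal (normal_density 0 \<sigma> (0 + \<sigma> * z))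
                                      * indicator A (0 + \<sigma> * z) \<partial>lborel)"
    using assms by (subst nn_integral_real_affine[where c = \<sigma> and t = 0]) auto
  also have "\<dots> = (\<integral>\<^sup>+z. ennreal (\<sigma> * normal_density 0 \<sigma> (0 + \<sigma> * z))
                          * indicator A (\<sigma> * z) \<partial>lborel)"
    using assms by (subst nn_integral_cmult[symmetric]) (auto simp: ennreal_mult mult.assoc)
  finally show ?thesis
    using normal_density_affine[OF assms(1), of 0] by simp
qed

lemma prob_space_centered_normal:
  assumes "\<sigma> \<ge> 0"
  shows "prob_space (centered_normal \<sigma>)"
  using assms prob_space_normal_density[of \<sigma> 0]
  by (auto simp: centered_normal_def prob_space_return)

lemma emeasure_centered_normal_abs_le_antimono:
  assumes "0 \<le> \<sigma>\<^sub>2" "\<sigma>\<^sub>2 < \<sigma>\<^sub>1"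
  shows "emeasure (centered_normal \<sigma>\<^sub>1) {y. \<bar>y\<bar> \<le> t} \<le> emeasure (centered_normal \<sigma>\<^sub>2) {y. \<bar>y\<bar> \<le> t}"
proof (cases "\<sigma>\<^sub>2 = 0")
  case True
  interpret N\<^sub>1: prob_space "centered_normal \<sigma>\<^sub>1"
    using assms by (intro prob_space_centered_normal) simp
  show ?thesis
  proof (cases "t \<ge> 0")
    case True
    with \<open>\<sigma>\<^sub>2 = 0\<close> show ?thesis
      using N\<^sub>1.emeasure_le_1 by (simp add: centered_normal_def)
  next
    case False
    then have "{y. \<bar>y\<bar> \<le> t} = {}" by auto
    then show ?thesis by simp
  qed
next
  case False
  with assms have "\<sigma>\<^sub>1 > 0" "\<sigma>\<^sub>2 > 0" by auto
  have "{y :: real. \<bar>y\<bar> \<le> t} \<in> sets borel"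
    by measurable
  note scaled = emeasure_centered_normal[OF _ this]
  have "indicator {y. \<bar>y\<bar> \<le> t} (\<sigma>\<^sub>1 * z) \<le> (indicator {y. \<bar>y\<bar> \<le> t} (\<sigma>\<^sub>2 * z) :: ennreal)" for z
  proof -
    have "\<bar>\<sigma>\<^sub>2 * z\<bar> \<le> \<bar>\<sigma>\<^sub>1 * z\<bar>"
      using assms by (simp add: abs_mult mult_right_mono)
    then show ?thesis
      by (auto simp: indicator_def)
  qed
  then show ?thesis
    unfolding scaled[OF \<open>\<sigma>\<^sub>1 > 0\<close>] scaled[OF \<open>\<sigma>\<^sub>2 > 0\<close>]
    by (intro nn_integral_mono mult_left_mono) auto
qed

lemma (in prob_space) emeasure_indep_var_pair:
  assumes "indep_var borel X borel Y" and A: "A \<in> sets (borel \<Otimes>\<^sub>M borel)"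
  shows "emeasure M {\<omega> \<in> space M. (X \<omega>, Y \<omega>) \<in> A}
    = (\<integral>\<^sup>+x. emeasure (distr M borel Y) (Pair x -` A) \<partial>distr M borel X)"
proof -
  have rv: "random_variable borel X" "random_variable borel Y"
    and joint: "distr M borel X \<Otimes>\<^sub>M distr M borel Y = distr M (borel \<Otimes>\<^sub>M borel) (\<lambda>\<omega>. (X \<omega>, Y \<omega>))"
    using assms(1) unfolding indep_var_distribution_eq by auto
  interpret Y: prob_space "distr M borel Y"
    using rv by (simp add: prob_space_distr)
  have "emeasure M {\<omega> \<in> space M. (X \<omega>, Y \<omega>) \<in> A}
      = emeasure (distr M (borel \<Otimes>\<^sub>M borel) (\<lambda>\<omega>. (X \<omega>, Y \<omega>))) A"
    using rv A by (subst emeasure_distr) (auto intro: measurable_Pair simp: Int_def conj_commute)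
  also have "\<dots> = (\<integral>\<^sup>+x. emeasure (distr M borel Y) (Pair x -` A) \<partial>distr M borel X)"
    using A by (simp flip: joint add: Y.emeasure_pair_measure_alt)
  finally show ?thesis .
qed

lemma (in prob_space) emeasure_add_abs_le:
  fixes X Y :: "'a \<Rightarrow> real"
  assumes "indep_var borel X borel Y"
  shows "emeasure M {\<omega> \<in> space M. X \<omega> + \<bar>Y \<omega>\<bar> \<le> \<epsilon>}
    = (\<integral>\<^sup>+x. emeasure (distr M borel Y) {y. \<bar>y\<bar> \<le> \<epsilon> - x} \<partial>distr M borel X)"
proof -
  have "{p \<in> space (borel \<Otimes>\<^sub>M borel). fst p + \<bar>snd p\<bar> \<le> \<epsilon>} \<in> sets (borel \<Otimes>\<^sub>M borel :: (real \<times> real) measure)"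
    by measurable
  then have "{p :: real \<times> real. fst p + \<bar>snd p\<bar> \<le> \<epsilon>} \<in> sets (borel \<Otimes>\<^sub>M borel)"
    by (simp add: space_pair_measure)
  from emeasure_indep_var_pair[OF assms this] show ?thesis
    by (simp add: vimage_def add.commute le_diff_eq)
qed

theorem lemma4:
  fixes M :: "'a measure" and X Y1 Y2 :: "'a \<Rightarrow> real"
    and s1 s2 \<epsilon> :: real
  assumes "prob_space M"
    and "X \<in> borel_measurable M" and "Y1 \<in> borel_measurable M" and "Y2 \<in> borel_measurable M"
    and "s2 \<ge> 0" and "s1 > s2"
    and "distr M borel Y1 = centered_normal s1"
    and "distr M borel Y2 = centered_normal s2"
    and "prob_space.indep_var M borel X borel Y1"
    and "prob_space.indep_var M borel X borel Y2"
  shows "measure M {\<omega> \<in> space M. X \<omega> + \<bar>Y1 \<omega>\<bar> \<le> \<epsilon>}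
           \<le> measure M {\<omega> \<in> space M. X \<omega> + \<bar>Y2 \<omega>\<bar> \<le> \<epsilon>}"
proof -
  interpret prob_space M by fact
  have "emeasure M {\<omega> \<in> space M. X \<omega> + \<bar>Y1 \<omega>\<bar> \<le> \<epsilon>}
      \<le> emeasure M {\<omega> \<in> space M. X \<omega> + \<bar>Y2 \<omega>\<bar> \<le> \<epsilon>}"
    unfolding emeasure_add_abs_le[OF assms(9)] emeasure_add_abs_le[OF assms(10)] assms(7,8)
    using assms(5,6) by (intro nn_integral_mono emeasure_centered_normal_abs_le_antimono)
  then show ?thesis
    by (simp add: emeasure_eq_measure)
qed

end
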